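(* Let $d\ge2$ and let $\rho_{DS}=\sum_{\mathbf k}p_{\mathbf k}|D_{\mathbf k}\rangle\langle D_{\mathbf k}|$ be a diagonal symmetric state on $(\mathbb{C}^d)^{\otimes 4}$. Let $M^{(4)}(\rho_{DS})$ be the $\frac{d^3+d}{2}\times\frac{d^3+d}{2}$ matrix $$M^{(4)}(\rho_{DS})=\bar M\;\oplus\;\bigoplus_{0\le i<j\le d-1} M_{ij},$$ where $\bar M$ is the $s\times s$ matrix, $s=d(d+1)/2$, indexed by the ordered list $r_1,\dots,r_s$ of pairs $(a,b)$ with $0\le a\le b\le d-1$, with entries $\bar M_{r_\alpha r_\beta}=\bar p_{r_\alpha r_\beta}$, and each $M_{ij}$ is the $d\times d$ matrix with entries $(M_{ij})_{ab}=\bar p_{ijab}$. Then $\rho_{DS}$ is PPT if and only if $M^{(4)}(\rho_{DS})\in\mathcal{DNN}_{\frac{d^3+d}{2}}$.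
   Context: For $N=4$ and local dimension $d$: $\mathbf k=(k_0,\dots,k_{d-1})$, $k_i\ge0$, $\sum k_i=4$, and $|D_{\mathbf k}\rangle=\binom{4}{\mathbf k}^{-1/2}\sum_{\pi}\pi\big(|0\rangle^{\otimes k_0}\otimes\cdots\otimes|d-1\rangle^{\otimes k_{d-1}}\big)$, summing over distinct permutations of the tensor factors, $\binom{4}{\mathbf k}=\frac{4!}{k_0!\cdots k_{d-1}!}$. A diagonal symmetric state has $p_{\mathbf k}\ge0$, $\sum p_{\mathbf k}=1$. For indices $a,b,c,e$, $p_{abce}$ is the coefficient of the Dicke state with index multiset $\{a,b,c,e\}$ and $\bar p_{abce}=p_{abce}/\binom{4}{\mathbf k}$; for pairs $r_\alpha=(a,b)$, $r_\beta=(c,e)$, $\bar p_{r_\alpha r_\beta}=\bar p_{abce}$. PPT means the partial transpose with respect to every bipartition of the four parties ($1:3$ and $2:2$) is positive semidefinite. $\mathcal{DNN}_n$ is the cone of $n\times n$ positive semidefinite matrices with non-negative entries. *)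

theory Defs
  imports Complex_Main "HOL-Library.Multiset"
begin

text \<open>Computational basis of (C^d)^{\<otimes>4}: lists of length 4 with entries in {0..<d}.\<close>
definition idx4 :: "nat \<Rightarrow> nat list set" where
  "idx4 d = {xs. length xs = 4 \<and> set xs \<subseteq> {..<d}}"

text \<open>Occupation vectors k = (k_0,...,k_{d-1}) with sum 4, represented as multisets
  of size 4 over {0..<d} (count K i = k_i).\<close>
definition Kset :: "nat \<Rightarrow> nat multiset set" where
  "Kset d = {K. size K = 4 \<and> set_mset K \<subseteq> {..<d}}"

definition multinom :: "nat multiset \<Rightarrow> real" where
  "multinom K = fact (size K) / (\<Prod>i\<in>set_mset K. fact (count K i))"

text \<open>Dicke state |D_k>: normalised sum of all distinct arrangements of the multiset,
  i.e. of all basis lists xs with mset xs = K.\<close>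
definition dicke :: "nat multiset \<Rightarrow> nat list \<Rightarrow> complex" where
  "dicke K xs = (if mset xs = K then complex_of_real (1 / sqrt (multinom K)) else 0)"

definition rhoDS :: "nat \<Rightarrow> (nat multiset \<Rightarrow> real) \<Rightarrow> nat list \<Rightarrow> nat list \<Rightarrow> complex" where
  "rhoDS d p xs ys = (\<Sum>K\<in>Kset d. complex_of_real (p K) * dicke K xs * cnj (dicke K ys))"

definition diag_sym_coeffs :: "nat \<Rightarrow> (nat multiset \<Rightarrow> real) \<Rightarrow> bool" where
  "diag_sym_coeffs d p \<longleftrightarrow> (\<forall>K\<in>Kset d. 0 \<le> p K) \<and> (\<Sum>K\<in>Kset d. p K) = 1"

definition psd_on :: "'i set \<Rightarrow> ('i \<Rightarrow> 'i \<Rightarrow> complex) \<Rightarrow> bool" where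
  "psd_on I A \<longleftrightarrow> (\<forall>x\<in>I. \<forall>y\<in>I. A y x = cnj (A x y)) \<and>
     (\<forall>v :: 'i \<Rightarrow> complex. let q = (\<Sum>x\<in>I. \<Sum>y\<in>I. cnj (v x) * A x y * v y)
                             in Im q = 0 \<and> 0 \<le> Re q)"

definition ptrans :: "nat set \<Rightarrow> (nat list \<Rightarrow> nat list \<Rightarrow> complex) \<Rightarrow> nat list \<Rightarrow> nat list \<Rightarrow> complex" where
  "ptrans S A xs ys =
     A (map (\<lambda>i. if i \<in> S then ys ! i else xs ! i) [0..<4])
       (map (\<lambda>i. if i \<in> S then xs ! i else ys ! i) [0..<4])"

definition PPT4 :: "nat \<Rightarrow> (nat list \<Rightarrow> nat list \<Rightarrow> complex) \<Rightarrow> bool" where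
  "PPT4 d A \<longleftrightarrow> (\<forall>S. S \<subseteq> {0..<4} \<and> S \<noteq> {} \<and> S \<noteq> {0..<4} \<longrightarrow> psd_on (idx4 d) (ptrans S A))"

definition dnn_on :: "'i set \<Rightarrow> ('i \<Rightarrow> 'i \<Rightarrow> real) \<Rightarrow> bool" where
  "dnn_on I M \<longleftrightarrow> (\<forall>x\<in>I. \<forall>y\<in>I. M y x = M x y \<and> 0 \<le> M x y) \<and>
     (\<forall>v :: 'i \<Rightarrow> real. 0 \<le> (\<Sum>x\<in>I. \<Sum>y\<in>I. v x * M x y * v y))"

definition pbar :: "(nat multiset \<Rightarrow> real) \<Rightarrow> nat multiset \<Rightarrow> real" where
  "pbar p K = p K / multinom K"

text \<open>Index set of M^(4) = Mbar (+) (+)_{i<j} M_ij: Inl (a,b) with a\<le>b<d indexes Mbar;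
  Inr (i,j,a) indexes row/column a of the block M_ij.\<close>
definition M4idx :: "nat \<Rightarrow> ((nat \<times> nat) + (nat \<times> nat \<times> nat)) set" where
  "M4idx d = Inl ` {(a,b). a \<le> b \<and> b < d} \<union> Inr ` {(i,j,a). i < j \<and> j < d \<and> a < d}"

definition M4 :: "(nat multiset \<Rightarrow> real) \<Rightarrow> (nat \<times> nat) + (nat \<times> nat \<times> nat)
                   \<Rightarrow> (nat \<times> nat) + (nat \<times> nat \<times> nat) \<Rightarrow> real" where
  "M4 p x y = (case (x, y) of
      (Inl (a,b), Inl (c,e)) \<Rightarrow> pbar p {#a,b,c,e#}
    | (Inr (i,j,a), Inr (i',j',b)) \<Rightarrow> (if (i,j) = (i',j') then pbar p {#i,j,a,b#} else 0)
    | _ \<Rightarrow> 0)"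

end

(*
  Identify a basis vector of (C^d)^(x4) with the pair (A, B) of the multisets of its
  local indices outside and inside the set S of transposed parties. The entry of the
  partial transpose of rho_DS at ((A, B), (A', B')) is pbar (A + B') if A + B' = A' + B
  and 0 otherwise, so every partial transpose is the pullback of one matrix on such
  pairs. That matrix is block diagonal for the excess (A - B, B - A). On the block of
  excess (P, N) a pair is determined by its common part X = A \<inter># B, of some size r
  with |P + N| + 2 r = 4, and the block is the Hankel-type matrix pbar (P + N + X + Y).
  For r = 2 this is Mbar, for r = 1 it is a block M_ij or a principal submatrix of
  Mbar, and for r = 0 it is a single entry of Mbar; hence M^(4) in DNN implies PPT.
  Conversely, M^(4) is the principal submatrix of the partial transpose on parties
  {2, 3} at the basis vectors |a b a b> and |i a j a>, and every pbar_k is a diagonal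
  entry of that partial transpose.
*)
theory Submission
  imports Defs "HOL-Library.Complex_Order"
begin

section \<open>Positive semidefinite Hermitian forms\<close>

definition quad_form ::
    "'i set \<Rightarrow> ('i \<Rightarrow> 'i \<Rightarrow> complex) \<Rightarrow> ('i \<Rightarrow> complex) \<Rightarrow> complex" where
  "quad_form I A v = (\<Sum>x\<in>I. \<Sum>y\<in>I. cnj (v x) * A x y * v y)"

definition psd_form_on :: "'i set \<Rightarrow> ('i \<Rightarrow> 'i \<Rightarrow> complex) \<Rightarrow> bool" where
  "psd_form_on I A \<longleftrightarrow> (\<forall>v. 0 \<le> quad_form I A v)"

lemma psd_on_iff_hermitian_psd_form:
  "psd_on I A \<longleftrightarrow> (\<forall>x\<in>I. \<forall>y\<in>I. A y x = cnj (A x y)) \<and> psd_form_on I A"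
  unfolding psd_on_def psd_form_on_def quad_form_def Let_def less_eq_complex_def by auto

lemma quad_form_pullback:
  assumes "finite I" "finite J" "h ` I \<subseteq> J"
    and "\<And>x y. x \<in> I \<Longrightarrow> y \<in> I \<Longrightarrow> B x y = A (h x) (h y)"
  shows "quad_form I B v = quad_form J A (\<lambda>j. \<Sum>x | x \<in> I \<and> h x = j. v x)"
proof -
  define w where "w j = (\<Sum>x | x \<in> I \<and> h x = j. v x)" for j
  have row: "(\<Sum>j'\<in>J. A j j' * w j') = (\<Sum>y\<in>I. A j (h y) * v y)" for j
  proof -
    have "(\<Sum>j'\<in>J. A j j' * w j') = (\<Sum>j'\<in>J. \<Sum>y | y \<in> I \<and> h y = j'. A j (h y) * v y)"
      unfolding w_def sum_distrib_left by (intro sum.cong) auto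
    also have "\<dots> = (\<Sum>y\<in>I. A j (h y) * v y)"
      using assms(1-3) by (rule sum.group)
    finally show ?thesis .
  qed
  have "quad_form J A w = (\<Sum>j\<in>J. cnj (w j) * (\<Sum>y\<in>I. A j (h y) * v y))"
    unfolding quad_form_def row[symmetric] by (simp add: sum_distrib_left mult.assoc)
  also have "\<dots> = (\<Sum>j\<in>J. \<Sum>x | x \<in> I \<and> h x = j. cnj (v x) * (\<Sum>y\<in>I. A (h x) (h y) * v y))"
    unfolding w_def cnj_sum sum_distrib_right by (intro sum.cong) auto
  also have "\<dots> = (\<Sum>x\<in>I. cnj (v x) * (\<Sum>y\<in>I. A (h x) (h y) * v y))"
    using assms(1-3) by (rule sum.group)
  also have "\<dots> = quad_form I B v"
    unfolding quad_form_def using assms(4) by (simp add: sum_distrib_left mult.assoc)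
  finally show ?thesis
    unfolding w_def by simp
qed

lemma psd_form_on_pullback:
  assumes "finite I" "finite J" "h ` I \<subseteq> J"
    and "\<And>x y. x \<in> I \<Longrightarrow> y \<in> I \<Longrightarrow> B x y = A (h x) (h y)"
    and "psd_form_on J A"
  shows "psd_form_on I B"
  using assms(5) quad_form_pullback[of I J h B A, OF assms(1-4)] unfolding psd_form_on_def by metis

lemma psd_form_on_block_diagonal:
  assumes "finite J"
    and "\<And>x y. x \<in> J \<Longrightarrow> y \<in> J \<Longrightarrow> \<kappa> x \<noteq> \<kappa> y \<Longrightarrow> A x y = 0"
    and "\<And>k. k \<in> \<kappa> ` J \<Longrightarrow> psd_form_on {x \<in> J. \<kappa> x = k} A"
  shows "psd_form_on J A"
  unfolding psd_form_on_def
proof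
  fix v
  have row: "(\<Sum>y\<in>J. cnj (v x) * A x y * v y) =
      (\<Sum>y | y \<in> J \<and> \<kappa> y = \<kappa> x. cnj (v x) * A x y * v y)"
    if "x \<in> J" for x
    using assms(1) that by (intro sum.mono_neutral_right) (auto dest: assms(2)[of x])
  have "quad_form J A v = (\<Sum>x\<in>J. \<Sum>y | y \<in> J \<and> \<kappa> y = \<kappa> x. cnj (v x) * A x y * v y)"
    unfolding quad_form_def using row by simp
  also have "\<dots> = (\<Sum>k\<in>\<kappa> ` J. \<Sum>x | x \<in> J \<and> \<kappa> x = k.
      \<Sum>y | y \<in> J \<and> \<kappa> y = \<kappa> x. cnj (v x) * A x y * v y)"
    using assms(1) by (rule sum.image_gen)
  also have "\<dots> = (\<Sum>k\<in>\<kappa> ` J. quad_form {x \<in> J. \<kappa> x = k} A v)"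
    unfolding quad_form_def by (intro sum.cong refl) (auto intro!: sum.cong)
  also have "0 \<le> \<dots>"
    using assms(3) unfolding psd_form_on_def by (intro sum_nonneg) auto
  finally show "0 \<le> quad_form J A v" .
qed

lemma psd_form_on_of_real_iff:
  fixes M :: "'i \<Rightarrow> 'i \<Rightarrow> real"
  assumes sym: "\<And>x y. x \<in> I \<Longrightarrow> y \<in> I \<Longrightarrow> M y x = M x y"
  shows "psd_form_on I (\<lambda>x y. of_real (M x y)) \<longleftrightarrow>
    (\<forall>u. 0 \<le> (\<Sum>x\<in>I. \<Sum>y\<in>I. u x * M x y * u y))"
proof
  assume "psd_form_on I (\<lambda>x y. of_real (M x y))"
  then have "0 \<le> quad_form I (\<lambda>x y. of_real (M x y)) (\<lambda>x. of_real (u x))" for u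
    unfolding psd_form_on_def by blast
  then show "\<forall>u. 0 \<le> (\<Sum>x\<in>I. \<Sum>y\<in>I. u x * M x y * u y)"
    by (simp add: quad_form_def less_eq_complex_def)
next
  assume real_psd: "\<forall>u. 0 \<le> (\<Sum>x\<in>I. \<Sum>y\<in>I. u x * M x y * u y)"
  show "psd_form_on I (\<lambda>x y. of_real (M x y))"
    unfolding psd_form_on_def
  proof
    fix v :: "'i \<Rightarrow> complex"
    define a b where "a x = Re (v x)" and "b x = Im (v x)" for x
    let ?q = "quad_form I (\<lambda>x y. of_real (M x y)) v"
    have re: "Re ?q = (\<Sum>x\<in>I. \<Sum>y\<in>I. a x * M x y * a y) + (\<Sum>x\<in>I. \<Sum>y\<in>I. b x * M x y * b y)"
      unfolding quad_form_def a_def b_def by (simp add: Re_sum sum.distrib[symmetric] algebra_simps)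
    have im: "Im ?q = (\<Sum>x\<in>I. \<Sum>y\<in>I. a x * M x y * b y) - (\<Sum>x\<in>I. \<Sum>y\<in>I. b x * M x y * a y)"
      unfolding quad_form_def a_def b_def by (simp add: Im_sum sum_subtractf[symmetric] algebra_simps)
    have "(\<Sum>x\<in>I. \<Sum>y\<in>I. b x * M x y * a y) = (\<Sum>y\<in>I. \<Sum>x\<in>I. b x * M x y * a y)"
      by (rule sum.swap)
    also have "\<dots> = (\<Sum>x\<in>I. \<Sum>y\<in>I. a x * M x y * b y)"
      using sym by (intro sum.cong refl) (simp add: algebra_simps)
    finally have "Im ?q = 0"
      using im by simp
    moreover have "0 \<le> Re ?q"
      using re real_psd by simp
    ultimately show "0 \<le> ?q"
      by (simp add: less_eq_complex_def)
  qed
qed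

lemma dnn_on_iff_psd_form:
  "dnn_on I M \<longleftrightarrow>
    (\<forall>x\<in>I. \<forall>y\<in>I. M y x = M x y \<and> 0 \<le> M x y) \<and> psd_form_on I (\<lambda>x y. of_real (M x y))"
  unfolding dnn_on_def using psd_form_on_of_real_iff[of I M] by blast

lemma psd_form_on_diag_nonneg:
  assumes "psd_form_on I A" "finite I" "x \<in> I"
  shows "0 \<le> A x x"
proof -
  have cnj_of_bool: "cnj (of_bool b) = of_bool b" for b
    by (cases b) simp_all
  have "0 \<le> quad_form I A (\<lambda>y. of_bool (y = x))"
    using assms(1) unfolding psd_form_on_def by blast
  also have "quad_form I A (\<lambda>y. of_bool (y = x)) = A x x"
    unfolding quad_form_def using assms(2,3)
    by (simp add: cnj_of_bool Int_insert_left if_distrib[of "sum _"] cong: if_cong)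
  finally show ?thesis .
qed

lemma psd_form_on_pullback_dnn:
  assumes "dnn_on J M" "finite I" "finite J" "h ` I \<subseteq> J"
    and "\<And>x y. x \<in> I \<Longrightarrow> y \<in> I \<Longrightarrow> N x y = M (h x) (h y)"
  shows "psd_form_on I (\<lambda>x y. of_real (N x y))"
  using assms psd_form_on_pullback[of I J h "\<lambda>x y. of_real (N x y)" "\<lambda>x y. of_real (M x y)"]
  by (simp add: dnn_on_iff_psd_form)

section \<open>Partial transposes of diagonal symmetric states\<close>

lemma multinom_pos: "0 < multinom K"
  unfolding multinom_def by (intro divide_pos_pos prod_pos) auto

lemma Kset_eq_multisets_of_size: "Kset d = multisets_of_size {..<d} 4"
  unfolding Kset_def multisets_of_size_def by auto

lemma finite_Kset: "finite (Kset d)"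
  unfolding Kset_eq_multisets_of_size by (simp add: finite_multisets_of_size)

lemma finite_idx4: "finite (idx4 d)"
proof -
  have "idx4 d = {xs. set xs \<subseteq> {..<d} \<and> length xs = 4}"
    unfolding idx4_def by auto
  then show ?thesis
    by (simp add: finite_lists_length_eq)
qed

lemma rhoDS_eq:
  assumes "xs \<in> idx4 d"
  shows "rhoDS d p xs ys = (if mset xs = mset ys then of_real (pbar p (mset xs)) else 0)"
proof -
  let ?c = "complex_of_real (1 / sqrt (multinom (mset xs)))"
  have K: "mset xs \<in> Kset d"
    using assms unfolding idx4_def Kset_def by auto
  have "rhoDS d p xs ys =
      (\<Sum>K\<in>Kset d. if K = mset xs then of_real (p K) * dicke K xs * cnj (dicke K ys) else 0)"
    unfolding rhoDS_def by (intro sum.cong) (auto simp: dicke_def)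
  also have "\<dots> = of_real (p (mset xs)) * ?c * (if mset xs = mset ys then ?c else 0)"
    using K finite_Kset by (simp add: dicke_def)
  also have "\<dots> = (if mset xs = mset ys then of_real (pbar p (mset xs)) else 0)"
  proof -
    have "1 / sqrt (multinom (mset xs)) * (1 / sqrt (multinom (mset xs))) = 1 / multinom (mset xs)"
      using multinom_pos[of "mset xs"] by (simp add: real_sqrt_mult_self)
    then show ?thesis
      unfolding pbar_def by (auto simp: field_simps simp flip: of_real_mult)
  qed
  finally show ?thesis .
qed

definition parties_split :: "nat set \<Rightarrow> nat list \<Rightarrow> nat multiset \<times> nat multiset" where
  "parties_split S xs =
     (mset (map ((!) xs) (filter (\<lambda>i. i \<notin> S) [0..<4])),
      mset (map ((!) xs) (filter (\<lambda>i. i \<in> S) [0..<4])))"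

lemma mset_map_if_filter:
  "mset (map (\<lambda>i. if P i then f i else g i) xs) =
     mset (map g (filter (\<lambda>i. \<not> P i) xs)) + mset (map f (filter P xs))"
  by (induction xs) auto

lemma mset_ptrans_index:
  "mset (map (\<lambda>i. if i \<in> S then ys ! i else xs ! i) [0..<4]) =
     fst (parties_split S xs) + snd (parties_split S ys)"
  unfolding parties_split_def mset_map_if_filter by simp

lemma parties_split_add:
  assumes "length xs = 4"
  shows "fst (parties_split S xs) + snd (parties_split S xs) = mset xs"
proof -
  have "map (\<lambda>i. if i \<in> S then xs ! i else xs ! i) [0..<4] = xs"
    using map_nth[of xs] assms by simp
  then show ?thesis
    using mset_ptrans_index[of S xs xs] by simp
qed

lemma ptrans_index_in_idx4:
  assumes "xs \<in> idx4 d" "ys \<in> idx4 d"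
  shows "map (\<lambda>i. if i \<in> S then ys ! i else xs ! i) [0..<4] \<in> idx4 d"
proof -
  have "xs ! i < d \<and> ys ! i < d" if "i < 4" for i
    using assms that unfolding idx4_def by (simp add: subset_code(1) all_set_conv_all_nth)
  then show ?thesis
    unfolding idx4_def by auto
qed

definition Kpairs :: "nat \<Rightarrow> (nat multiset \<times> nat multiset) set" where
  "Kpairs d = {x. fst x + snd x \<in> Kset d}"

lemma finite_Kpairs: "finite (Kpairs d)"
proof -
  let ?B = "\<Union>r\<le>4. multisets_of_size {..<d} r"
  have bounded: "A \<in> ?B" if "A \<subseteq># K" "K \<in> Kset d" for A K
  proof -
    have "size A \<le> 4" "set_mset A \<subseteq> {..<d}"
      using that size_mset_mono set_mset_mono unfolding Kset_def by fastforce+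
    then show ?thesis
      unfolding multisets_of_size_def by blast
  qed
  have "Kpairs d \<subseteq> ?B \<times> ?B"
  proof
    fix x
    assume "x \<in> Kpairs d"
    then have K: "fst x + snd x \<in> Kset d"
      by (simp add: Kpairs_def)
    have "fst x \<in> ?B" "snd x \<in> ?B"
      using bounded[OF mset_subset_eq_add_left K] bounded[OF mset_subset_eq_add_right K] .
    then show "x \<in> ?B \<times> ?B"
      by (simp add: mem_Times_iff)
  qed
  moreover have "finite ?B"
    by (simp add: finite_multisets_of_size)
  ultimately show ?thesis
    using finite_subset by blast
qed

lemma parties_split_in_Kpairs:
  assumes "xs \<in> idx4 d"
  shows "parties_split S xs \<in> Kpairs d"
proof -
  have split: "fst (parties_split S xs) + snd (parties_split S xs) = mset xs"
    using assms parties_split_add unfolding idx4_def by blast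
  show ?thesis
    using assms unfolding Kpairs_def mem_Collect_eq split idx4_def Kset_def by simp
qed

definition pt_matrix ::
    "(nat multiset \<Rightarrow> real) \<Rightarrow> nat multiset \<times> nat multiset \<Rightarrow> nat multiset \<times> nat multiset \<Rightarrow> real"
  where
  "pt_matrix p x y = (if fst x + snd y = fst y + snd x then pbar p (fst x + snd y) else 0)"

lemma pt_matrix_sym: "pt_matrix p y x = pt_matrix p x y"
  unfolding pt_matrix_def by (auto simp: add.commute)

lemma ptrans_rhoDS_eq:
  assumes "xs \<in> idx4 d" "ys \<in> idx4 d"
  shows "ptrans S (rhoDS d p) xs ys = of_real (pt_matrix p (parties_split S xs) (parties_split S ys))"
proof -
  let ?a = "map (\<lambda>i. if i \<in> S then ys ! i else xs ! i) [0..<4]"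
  let ?b = "map (\<lambda>i. if i \<in> S then xs ! i else ys ! i) [0..<4]"
  have "ptrans S (rhoDS d p) xs ys = (if mset ?a = mset ?b then of_real (pbar p (mset ?a)) else 0)"
    unfolding ptrans_def by (rule rhoDS_eq[OF ptrans_index_in_idx4[OF assms]])
  then show ?thesis
    unfolding mset_ptrans_index pt_matrix_def by simp
qed

definition excess :: "nat multiset \<times> nat multiset \<Rightarrow> nat multiset \<times> nat multiset" where
  "excess x = (fst x - snd x, snd x - fst x)"

lemma pt_matrix_eq_0_if_excess_neq:
  assumes "excess x \<noteq> excess y"
  shows "pt_matrix p x y = 0"
proof -
  have "excess x = excess y" if "fst x + snd y = fst y + snd x"
  proof -
    have counts: "count (fst x) a + count (snd y) a = count (fst y) a + count (snd x) a" for a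
      using arg_cong[OF that, of "\<lambda>M. count M a"] by simp
    have "count (fst x) a - count (snd x) a = count (fst y) a - count (snd y) a \<and>
        count (snd x) a - count (fst x) a = count (snd y) a - count (fst y) a" for a
      using counts[of a] by linarith
    then show ?thesis
      unfolding excess_def by (simp add: multiset_eq_iff)
  qed
  with assms show ?thesis
    unfolding pt_matrix_def by auto
qed

lemma excess_decomp:
  assumes "excess x = (P, N)"
  shows "fst x = P + (fst x \<inter># snd x)" "snd x = N + (fst x \<inter># snd x)"
proof -
  have "P = fst x - snd x" "N = snd x - fst x"
    using assms by (simp_all add: excess_def)
  then show "fst x = P + (fst x \<inter># snd x)" "snd x = N + (fst x \<inter># snd x)"
    by (auto simp: multiset_eq_iff)
qed

lemma pt_matrix_on_block:
  assumes "excess x = (P, N)" "excess y = (P, N)"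
  shows "pt_matrix p x y = pbar p (P + N + (fst x \<inter># snd x) + (fst y \<inter># snd y))"
proof -
  obtain X Y where X: "fst x = P + X" "snd x = N + X" "X = fst x \<inter># snd x"
    and Y: "fst y = P + Y" "snd y = N + Y" "Y = fst y \<inter># snd y"
    using excess_decomp[OF assms(1)] excess_decomp[OF assms(2)] by blast
  have "fst x + snd y = P + N + X + Y" "fst y + snd x = P + N + X + Y"
    by (simp_all add: X(1,2) Y(1,2) ac_simps)
  then show ?thesis
    unfolding pt_matrix_def X(3) Y(3) by simp
qed

section \<open>The blocks of the matrix M^(4)\<close>

lemma finite_M4idx: "finite (M4idx d)"
proof -
  have "{(a, b). a \<le> b \<and> b < d} \<subseteq> {..<d} \<times> {..<d}"
    and "{(i, j, a). i < j \<and> j < d \<and> a < d} \<subseteq> {..<d} \<times> {..<d} \<times> {..<d}"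
    by auto
  then show ?thesis
    unfolding M4idx_def by (meson finite_Un finite_SigmaI finite_imageI finite_lessThan finite_subset)
qed

lemma Inl_in_M4idx: "Inl (a, b) \<in> M4idx d \<longleftrightarrow> a \<le> b \<and> b < d"
  by (auto simp: M4idx_def)

lemma Inr_in_M4idx: "Inr (i, j, a) \<in> M4idx d \<longleftrightarrow> i < j \<and> j < d \<and> a < d"
  by (auto simp: M4idx_def)

definition sorted_pair :: "nat multiset \<Rightarrow> nat \<times> nat" where
  "sorted_pair X = (Min (set_mset X), Max (set_mset X))"

lemma sorted_pair_mset:
  assumes "size X = 2" "sorted_pair X = (a, b)"
  shows "X = {#a, b#}" "a \<le> b"
proof -
  obtain c Y where "X = add_mset c Y" "size Y = 1"
    using size_eq_Suc_imp_eq_union[of X 1] assms(1) by auto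
  then obtain e where "X = {#c, e#}"
    using size_1_singleton_mset by blast
  then show "X = {#a, b#}" "a \<le> b"
    using assms(2) by (cases "c \<le> e"; auto simp: sorted_pair_def min_def max_def add_mset_commute)+
qed

lemma Inl_sorted_pair_in_M4idx:
  assumes "X \<in> multisets_of_size {..<d} 2"
  shows "Inl (sorted_pair X) \<in> M4idx d"
proof -
  obtain a b where ab: "sorted_pair X = (a, b)"
    by fastforce
  then show ?thesis
    using assms sorted_pair_mset[OF _ ab] by (auto simp: multisets_of_size_def Inl_in_M4idx)
qed

lemma M4_Inl_sorted_pair:
  assumes "size X = 2" "size Y = 2"
  shows "M4 p (Inl (sorted_pair X)) (Inl (sorted_pair Y)) = pbar p (X + Y)"
proof -
  obtain a b c e where ab: "sorted_pair X = (a, b)" and ce: "sorted_pair Y = (c, e)"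
    by fastforce
  show ?thesis
    using sorted_pair_mset(1)[OF assms(1) ab] sorted_pair_mset(1)[OF assms(2) ce]
    unfolding ab ce M4_def by (simp add: add_mset_commute)
qed

lemma multisets_of_size_1: "multisets_of_size A 1 = (\<lambda>a. {#a#}) ` A"
proof
  show "multisets_of_size A 1 \<subseteq> (\<lambda>a. {#a#}) ` A"
  proof
    fix X
    assume "X \<in> multisets_of_size A 1"
    then have X: "set_mset X \<subseteq> A" "size X = 1"
      by (simp_all add: multisets_of_size_def)
    then obtain a where "X = {#a#}"
      using size_1_singleton_mset by blast
    then show "X \<in> (\<lambda>a. {#a#}) ` A"
      using X(1) by simp
  qed
  show "(\<lambda>a. {#a#}) ` A \<subseteq> multisets_of_size A 1"
    by (auto simp: multisets_of_size_def)
qed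

lemma pbar_nonneg_if_dnn_M4:
  assumes "dnn_on (M4idx d) (M4 p)" "K \<in> Kset d"
  shows "0 \<le> pbar p K"
proof -
  obtain xs where xs: "K = mset xs"
    using ex_mset[of K] by auto
  let ?X = "mset (take 2 xs)" and ?Y = "mset (drop 2 xs)"
  have "length xs = 4" "set xs \<subseteq> {..<d}"
    using assms(2) unfolding xs Kset_def by simp_all
  moreover have "set (take 2 xs) \<subseteq> {..<d}" "set (drop 2 xs) \<subseteq> {..<d}"
    using order_trans[OF set_take_subset] order_trans[OF set_drop_subset] \<open>set xs \<subseteq> {..<d}\<close>
    by blast+
  ultimately have X: "?X \<in> multisets_of_size {..<d} 2" and Y: "?Y \<in> multisets_of_size {..<d} 2"
    unfolding multisets_of_size_def by simp_all
  have "0 \<le> M4 p (Inl (sorted_pair ?X)) (Inl (sorted_pair ?Y))"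
    using assms(1) Inl_sorted_pair_in_M4idx[OF X] Inl_sorted_pair_in_M4idx[OF Y]
    unfolding dnn_on_def by blast
  moreover have "K = ?X + ?Y"
    unfolding xs mset_append[symmetric] by simp
  ultimately show ?thesis
    using X Y M4_Inl_sorted_pair unfolding multisets_of_size_def by simp
qed

lemma psd_form_on_pbar_hankel_0:
  assumes "dnn_on (M4idx d) (M4 p)" "R \<in> Kset d"
  shows "psd_form_on {{#}} (\<lambda>X Y. of_real (pbar p (R + X + Y)))"
proof -
  have "0 \<le> c * pbar p R * c" for c
    using mult_nonneg_nonneg[OF pbar_nonneg_if_dnn_M4[OF assms] zero_le_square[of c]]
    by (simp add: algebra_simps)
  then show ?thesis
    by (subst psd_form_on_of_real_iff) simp_all
qed

lemma psd_form_on_pbar_hankel_1: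
  assumes dnn: "dnn_on (M4idx d) (M4 p)" and R: "size R = 2" "set_mset R \<subseteq> {..<d}"
  shows "psd_form_on ((\<lambda>a. {#a#}) ` {..<d}) (\<lambda>X Y. of_real (pbar p (R + X + Y)))"
proof -
  note pullback = psd_form_on_pullback_dnn[OF dnn finite_imageI[OF finite_lessThan] finite_M4idx]
  obtain i j where ij: "sorted_pair R = (i, j)"
    by fastforce
  have R_eq: "R = {#i, j#}" "i \<le> j"
    using sorted_pair_mset[OF R(1) ij] by simp_all
  have "j < d"
    using R(2) R_eq(1) by simp
  consider "i < j" | "j = i"
    using R_eq(2) by linarith
  then show ?thesis
  proof cases
    case 1
    show ?thesis
    proof (rule pullback[where h = "\<lambda>X. Inr (i, j, Max (set_mset X))"])
      show "(\<lambda>X. Inr (i, j, Max (set_mset X))) ` (\<lambda>a. {#a#}) ` {..<d} \<subseteq> M4idx d"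
        using 1 \<open>j < d\<close> by (auto simp: Inr_in_M4idx)
      show "pbar p (R + X + Y) = M4 p (Inr (i, j, Max (set_mset X))) (Inr (i, j, Max (set_mset Y)))"
        if "X \<in> (\<lambda>a. {#a#}) ` {..<d}" "Y \<in> (\<lambda>a. {#a#}) ` {..<d}" for X Y
        using that unfolding R_eq(1) M4_def by (auto simp: add_mset_commute)
    qed
  next
    case 2
    show ?thesis
    proof (rule pullback[where h = "\<lambda>X. Inl (sorted_pair (add_mset i X))"])
      show "(\<lambda>X. Inl (sorted_pair (add_mset i X))) ` (\<lambda>a. {#a#}) ` {..<d} \<subseteq> M4idx d"
        using 2 \<open>j < d\<close> by (auto intro!: Inl_sorted_pair_in_M4idx simp: multisets_of_size_def)
      show "pbar p (R + X + Y) = M4 p (Inl (sorted_pair (add_mset i X))) (Inl (sorted_pair (add_mset i Y)))"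
        if "X \<in> (\<lambda>a. {#a#}) ` {..<d}" "Y \<in> (\<lambda>a. {#a#}) ` {..<d}" for X Y
        using that 2 unfolding R_eq(1) by (auto simp: M4_Inl_sorted_pair add_mset_commute)
    qed
  qed
qed

lemma psd_form_on_pbar_hankel_2:
  assumes "dnn_on (M4idx d) (M4 p)"
  shows "psd_form_on (multisets_of_size {..<d} 2) (\<lambda>X Y. of_real (pbar p (X + Y)))"
  using assms finite_multisets_of_size[OF finite_lessThan] finite_M4idx
proof (rule psd_form_on_pullback_dnn[where h = "\<lambda>X. Inl (sorted_pair X)"])
  show "(\<lambda>X. Inl (sorted_pair X)) ` multisets_of_size {..<d} 2 \<subseteq> M4idx d"
    using Inl_sorted_pair_in_M4idx by blast
  show "pbar p (X + Y) = M4 p (Inl (sorted_pair X)) (Inl (sorted_pair Y))"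
    if "X \<in> multisets_of_size {..<d} 2" "Y \<in> multisets_of_size {..<d} 2" for X Y
    using that by (simp add: M4_Inl_sorted_pair multisets_of_size_def)
qed

lemma psd_form_on_pbar_hankel:
  assumes dnn: "dnn_on (M4idx d) (M4 p)"
    and R: "size R + 2 * r = 4" "set_mset R \<subseteq> {..<d}"
  shows "psd_form_on (multisets_of_size {..<d} r) (\<lambda>X Y. of_real (pbar p (R + X + Y)))"
proof -
  consider "r = 0" | "r = 1" | "r = 2"
    using R(1) by linarith
  then show ?thesis
  proof cases
    case 1
    then have "R \<in> Kset d"
      using R unfolding Kset_def by simp
    then show ?thesis
      unfolding 1 multisets_of_size_0 by (rule psd_form_on_pbar_hankel_0[OF dnn])
  next
    case 2
    then have "size R = 2"
      using R(1) by simp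
    then show ?thesis
      unfolding 2 multisets_of_size_1 using psd_form_on_pbar_hankel_1[OF dnn _ R(2)] by blast
  next
    case 3
    then have "R = {#}"
      using R(1) by simp
    then show ?thesis
      unfolding 3 using psd_form_on_pbar_hankel_2[OF dnn] by simp
  qed
qed

section \<open>The PPT criterion\<close>

lemma psd_form_on_pt_matrix_block:
  assumes dnn: "dnn_on (M4idx d) (M4 p)" and x0: "x0 \<in> Kpairs d" "excess x0 = (P, N)"
  shows "psd_form_on {x \<in> Kpairs d. excess x = (P, N)} (\<lambda>x y. of_real (pt_matrix p x y))"
proof -
  let ?block = "{x \<in> Kpairs d. excess x = (P, N)}"
  define common :: "nat multiset \<times> nat multiset \<Rightarrow> nat multiset"
    where "common x = fst x \<inter># snd x" for x
  have size_common: "size (P + N) + 2 * size (common x) = 4"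
    and set_common: "set_mset (P + N) \<union> set_mset (common x) \<subseteq> {..<d}" if "x \<in> ?block" for x
  proof -
    have "fst x = P + common x" "snd x = N + common x" "fst x + snd x \<in> Kset d"
      using that excess_decomp[of x P N] unfolding common_def Kpairs_def by simp_all
    then show "size (P + N) + 2 * size (common x) = 4"
      and "set_mset (P + N) \<union> set_mset (common x) \<subseteq> {..<d}"
      unfolding Kset_def by auto
  qed
  define r where "r = size (common x0)"
  have R: "size (P + N) + 2 * r = 4" "set_mset (P + N) \<subseteq> {..<d}"
    using size_common[of x0] set_common[of x0] x0 unfolding r_def by auto
  show ?thesis
  proof (rule psd_form_on_pullback[OF _ _ _ _ psd_form_on_pbar_hankel[OF dnn R]])
    show "finite ?block"
      using finite_Kpairs by simp
    show "finite (multisets_of_size {..<d} r)"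
      by (simp add: finite_multisets_of_size)
    show "common ` ?block \<subseteq> multisets_of_size {..<d} r"
    proof (rule image_subsetI)
      fix x
      assume x: "x \<in> ?block"
      then have "size (common x) = r"
        using size_common[OF x] R(1) by linarith
      then show "common x \<in> multisets_of_size {..<d} r"
        using set_common[OF x] unfolding multisets_of_size_def by blast
    qed
    show "of_real (pt_matrix p x y) = of_real (pbar p (P + N + common x + common y))"
      if "x \<in> ?block" "y \<in> ?block" for x y
      using that pt_matrix_on_block unfolding common_def by simp
  qed
qed

lemma psd_form_on_pt_matrix:
  assumes "dnn_on (M4idx d) (M4 p)"
  shows "psd_form_on (Kpairs d) (\<lambda>x y. of_real (pt_matrix p x y))"
proof (rule psd_form_on_block_diagonal[where \<kappa> = excess])
  show "finite (Kpairs d)"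
    by (rule finite_Kpairs)
  show "of_real (pt_matrix p x y) = 0" if "excess x \<noteq> excess y" for x y
    using pt_matrix_eq_0_if_excess_neq[OF that] by simp
  show "psd_form_on {x \<in> Kpairs d. excess x = k} (\<lambda>x y. of_real (pt_matrix p x y))"
    if k: "k \<in> excess ` Kpairs d" for k
  proof -
    obtain x0 where x0: "x0 \<in> Kpairs d" "excess x0 = k"
      using k by blast
    then show ?thesis
      using psd_form_on_pt_matrix_block[OF assms x0(1), of "fst k" "snd k"] by simp
  qed
qed

lemma PPT4_rhoDS_if_dnn_M4:
  assumes "dnn_on (M4idx d) (M4 p)"
  shows "PPT4 d (rhoDS d p)"
  unfolding PPT4_def psd_on_iff_hermitian_psd_form
proof (intro allI impI conjI ballI)
  fix S xs ys
  assume "xs \<in> idx4 d" "ys \<in> idx4 d"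
  then show "ptrans S (rhoDS d p) ys xs = cnj (ptrans S (rhoDS d p) xs ys)"
    using ptrans_rhoDS_eq pt_matrix_sym by simp
next
  fix S :: "nat set"
  show "psd_form_on (idx4 d) (ptrans S (rhoDS d p))"
  proof (rule psd_form_on_pullback[OF finite_idx4 finite_Kpairs _ _ psd_form_on_pt_matrix[OF assms]])
    show "parties_split S ` idx4 d \<subseteq> Kpairs d"
      using parties_split_in_Kpairs by blast
  qed (rule ptrans_rhoDS_eq)
qed

definition M4idx_to_idx4 :: "(nat \<times> nat) + (nat \<times> nat \<times> nat) \<Rightarrow> nat list" where
  "M4idx_to_idx4 z = (case z of Inl (a, b) \<Rightarrow> [a, b, a, b] | Inr (i, j, a) \<Rightarrow> [i, a, j, a])"

lemma M4idx_to_idx4_in_idx4: "x \<in> M4idx d \<Longrightarrow> M4idx_to_idx4 x \<in> idx4 d"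
  unfolding M4idx_def M4idx_to_idx4_def idx4_def by auto

lemma parties_split_23: "parties_split {2, 3} [a, b, c, e] = ({#a, b#}, {#c, e#})"
  unfolding parties_split_def by (simp add: upt_rec)

lemma M4_eq_pt_matrix:
  assumes "x \<in> M4idx d" "y \<in> M4idx d"
  shows "M4 p x y =
    pt_matrix p (parties_split {2, 3} (M4idx_to_idx4 x)) (parties_split {2, 3} (M4idx_to_idx4 y))"
proof -
  let ?e = "\<lambda>z. excess (parties_split {2, 3} (M4idx_to_idx4 z))"
  have e_Inl: "?e (Inl (a, b)) = ({#}, {#})" for a b
    by (simp add: M4idx_to_idx4_def parties_split_23 excess_def)
  have e_Inr: "?e (Inr (i, j, a)) = ({#i#}, {#j#})" if "i \<noteq> j" for i j a
    using that by (simp add: M4idx_to_idx4_def parties_split_23 excess_def)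
  show ?thesis
  proof (cases "?e x = ?e y")
    case True
    then consider (Inl) a b c e where "x = Inl (a, b)" "y = Inl (c, e)"
      | (Inr) i j a b where "x = Inr (i, j, a)" "y = Inr (i, j, b)"
      using assms unfolding M4idx_def by (auto simp: e_Inl e_Inr)
    then show ?thesis
      by cases (simp_all add: M4idx_to_idx4_def parties_split_23 pt_matrix_def M4_def add_mset_commute)
  next
    case False
    then have "M4 p x y = 0"
      using assms unfolding M4idx_def by (auto simp: M4_def e_Inl e_Inr)
    with False show ?thesis
      by (simp add: pt_matrix_eq_0_if_excess_neq)
  qed
qed

lemma pbar_nonneg_if_psd_ptrans:
  assumes "psd_form_on (idx4 d) (ptrans S (rhoDS d p))" "K \<in> Kset d"
  shows "0 \<le> pbar p K"
proof -
  obtain xs where xs: "K = mset xs"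
    using ex_mset[of K] by auto
  have idx: "xs \<in> idx4 d"
    using assms(2) unfolding xs Kset_def idx4_def by simp
  have "0 \<le> ptrans S (rhoDS d p) xs xs"
    using psd_form_on_diag_nonneg[OF assms(1) finite_idx4 idx] .
  moreover have "ptrans S (rhoDS d p) xs xs = of_real (pbar p K)"
    using parties_split_add[of xs S] idx
    unfolding ptrans_rhoDS_eq[OF idx idx] pt_matrix_def xs idx4_def by simp
  ultimately show ?thesis
    by (simp add: less_eq_complex_def)
qed

lemma dnn_M4_if_PPT4_rhoDS:
  assumes "PPT4 d (rhoDS d p)"
  shows "dnn_on (M4idx d) (M4 p)"
proof -
  have "(0::nat) \<in> {0..<4}" "(0::nat) \<notin> {2, 3}"
    by simp_all
  then have "{2, 3} \<noteq> {0..<4::nat}"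
    by blast
  then have "psd_on (idx4 d) (ptrans {2, 3} (rhoDS d p))"
    using assms[unfolded PPT4_def, rule_format, of "{2, 3}"] by simp
  then have psd: "psd_form_on (idx4 d) (ptrans {2, 3} (rhoDS d p))"
    by (simp add: psd_on_iff_hermitian_psd_form)
  have "psd_form_on (M4idx d) (\<lambda>x y. of_real (M4 p x y))"
  proof (rule psd_form_on_pullback[OF finite_M4idx finite_idx4 _ _ psd])
    show "M4idx_to_idx4 ` M4idx d \<subseteq> idx4 d"
      using M4idx_to_idx4_in_idx4 by blast
    show "of_real (M4 p x y) = ptrans {2, 3} (rhoDS d p) (M4idx_to_idx4 x) (M4idx_to_idx4 y)"
      if "x \<in> M4idx d" "y \<in> M4idx d" for x y
      using that M4_eq_pt_matrix ptrans_rhoDS_eq M4idx_to_idx4_in_idx4 by simp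
  qed
  moreover have "M4 p y x = M4 p x y" if "x \<in> M4idx d" "y \<in> M4idx d" for x y
    unfolding M4_eq_pt_matrix[OF that] M4_eq_pt_matrix[OF that(2,1)] by (rule pt_matrix_sym)
  moreover have "0 \<le> M4 p x y" if "x \<in> M4idx d" "y \<in> M4idx d" for x y
    using that unfolding M4idx_def
    by (auto simp: M4_def Kset_def intro!: pbar_nonneg_if_psd_ptrans[OF psd])
  ultimately show ?thesis
    by (simp add: dnn_on_iff_psd_form)
qed

theorem theorem8:
  fixes d :: nat and p :: "nat multiset \<Rightarrow> real"
  assumes "d \<ge> 2"
    and "diag_sym_coeffs d p"
  shows "PPT4 d (rhoDS d p) \<longleftrightarrow> dnn_on (M4idx d) (M4 p)"
  using PPT4_rhoDS_if_dnn_M4 dnn_M4_if_PPT4_rhoDS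
  by blast

end
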